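(* Let $\mathcal M=(S,L,\tau,\ell)$ be an LMC (possibly with infinitely many states) and $s,t\in S$ with $d(s,t)<1$. Then there exists a policy $T$ such that for every $\varepsilon>0$ there is $(u,v)\in S^2$ with $d(u,v)\le\varepsilon$ and $\mathcal R^T_{\mathcal M}((s,t),\{(u,v)\})>0$.
   Context: An LMC $\mathcal M=(S,L,\tau,\ell)$ has a nonempty countable state set $S$, finite label set $L$, finitely-branching transition function $\tau:S\to\mathrm{Distr}(S)$ and labelling $\ell$. The probabilistic bisimilarity distance $d$ is the least fixed point of $\Delta(e)(s,t)=1$ if $\ell(s)\ne\ell(t)$ and $\Delta(e)(s,t)=\min_{\omega\in\Omega(\tau(s),\tau(t))}\sum_{u,v}\omega(u,v)e(u,v)$ otherwise, where $\Omega(\mu,\nu)$ is the set of couplings (distributions on $S\times S$ with marginals $\mu,\nu$). Probabilistic bisimilarity $\sim$ is the largest equivalence $R$ on $S$ such that $(s,t)\in R$ implies $\ell(s)=\ell(t)$ and $\tau(s)(E)=\tau(t)(E)$ for every $R$-class $E$. Partition $S^2$ into $S^2_0=\{(s,t):s\sim t\}$, $S^2_1=\{(s,t):\ell(s)\ne\ell(t)\}$, $S^2_?=S^2\setminus(S^2_0\cup S^2_1)$. A policy is a map $T:S^2_?\to\mathrm{Distr}(S^2)$ with $T(s,t)\in\Omega(\tau(s),\tau(t))$. The Markov chain $\mathcal C^T_{\mathcal M}$ on $S^2$ has every pair in $S^2_0\cup S^2_1$ absorbing and from $(u,v)\in S^2_?$ moves to $(x,y)$ with probability $T(u,v)(x,y)$.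 $\mathcal R^T_{\mathcal M}((s,t),Z)$ is the probability that $\mathcal C^T_{\mathcal M}$ started in $(s,t)$ reaches $Z\subseteq S^2$. *)

theory Defs
  imports "HOL-Probability.Probability"
begin

text \<open>Labelled Markov chains. The state set S is the (countable, nonempty) type 's;
  L is the finite label set, tau the transition function, ell the labelling.\<close>

definition is_LMC :: "'l set \<Rightarrow> ('s::countable \<Rightarrow> 's pmf) \<Rightarrow> ('s \<Rightarrow> 'l) \<Rightarrow> bool" where
  "is_LMC L \<tau> lab \<longleftrightarrow> finite L \<and> (\<forall>s. lab s \<in> L) \<and> (\<forall>s. finite (set_pmf (\<tau> s)))"

definition couplings :: "'s pmf \<Rightarrow> 's pmf \<Rightarrow> ('s \<times> 's) pmf set" where
  "couplings \<mu> \<nu> = {\<omega>. map_pmf fst \<omega> = \<mu> \<and> map_pmf snd \<omega> = \<nu>}"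

definition Delta :: "('s \<Rightarrow> 's pmf) \<Rightarrow> ('s \<Rightarrow> 'l) \<Rightarrow> ('s \<Rightarrow> 's \<Rightarrow> real) \<Rightarrow> 's \<Rightarrow> 's \<Rightarrow> real" where
  "Delta \<tau> lab e s t =
     (if lab s \<noteq> lab t then 1
      else (INF \<omega> \<in> couplings (\<tau> s) (\<tau> t). measure_pmf.expectation \<omega> (\<lambda>(u, v). e u v)))"

text \<open>The probabilistic bisimilarity distance: the least fixed point of Delta on
  [0,1]-valued functions, i.e. the pointwise infimum of all such fixed points.\<close>
definition bisim_dist :: "('s \<Rightarrow> 's pmf) \<Rightarrow> ('s \<Rightarrow> 'l) \<Rightarrow> 's \<Rightarrow> 's \<Rightarrow> real" where
  "bisim_dist \<tau> lab s t =
     (INF e \<in> {e. Delta \<tau> lab e = e \<and> (\<forall>u v. 0 \<le> e u v \<and> e u v \<le> 1)}. e s t)"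

definition prob_bisimulation :: "('s \<Rightarrow> 's pmf) \<Rightarrow> ('s \<Rightarrow> 'l) \<Rightarrow> ('s \<times> 's) set \<Rightarrow> bool" where
  "prob_bisimulation \<tau> lab R \<longleftrightarrow> equiv UNIV R \<and>
     (\<forall>(s, t) \<in> R. lab s = lab t \<and> (\<forall>E \<in> UNIV // R. measure_pmf.prob (\<tau> s) E = measure_pmf.prob (\<tau> t) E))"

definition bisimilar :: "('s \<Rightarrow> 's pmf) \<Rightarrow> ('s \<Rightarrow> 'l) \<Rightarrow> 's \<Rightarrow> 's \<Rightarrow> bool" where
  "bisimilar \<tau> lab s t \<longleftrightarrow> (\<exists>R. prob_bisimulation \<tau> lab R \<and> (s, t) \<in> R)"

definition unknown_pairs :: "('s \<Rightarrow> 's pmf) \<Rightarrow> ('s \<Rightarrow> 'l) \<Rightarrow> ('s \<times> 's) set" where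
  "unknown_pairs \<tau> lab = {(s, t). \<not> bisimilar \<tau> lab s t \<and> lab s = lab t}"

definition is_policy :: "('s \<Rightarrow> 's pmf) \<Rightarrow> ('s \<Rightarrow> 'l) \<Rightarrow> ('s \<times> 's \<Rightarrow> ('s \<times> 's) pmf) \<Rightarrow> bool" where
  "is_policy \<tau> lab T \<longleftrightarrow> (\<forall>(s, t) \<in> unknown_pairs \<tau> lab. T (s, t) \<in> couplings (\<tau> s) (\<tau> t))"

definition chain_step :: "('s \<Rightarrow> 's pmf) \<Rightarrow> ('s \<Rightarrow> 'l) \<Rightarrow> ('s \<times> 's \<Rightarrow> ('s \<times> 's) pmf) \<Rightarrow> 's \<times> 's \<Rightarrow> ('s \<times> 's) pmf" where
  "chain_step \<tau> lab T x = (if x \<in> unknown_pairs \<tau> lab then T x else return_pmf x)"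

fun reach_within :: "('s \<Rightarrow> 's pmf) \<Rightarrow> ('s \<Rightarrow> 'l) \<Rightarrow> ('s \<times> 's \<Rightarrow> ('s \<times> 's) pmf) \<Rightarrow> ('s \<times> 's) set \<Rightarrow> nat \<Rightarrow> 's \<times> 's \<Rightarrow> real" where
  "reach_within \<tau> lab T Z 0 x = (if x \<in> Z then 1 else 0)"
| "reach_within \<tau> lab T Z (Suc n) x =
     (if x \<in> Z then 1 else measure_pmf.expectation (chain_step \<tau> lab T x) (reach_within \<tau> lab T Z n))"

text \<open>Probability that the chain started in x eventually reaches Z (limit of the increasing
  sequence of bounded-horizon reachability probabilities).\<close>
definition reach_prob :: "('s \<Rightarrow> 's pmf) \<Rightarrow> ('s \<Rightarrow> 'l) \<Rightarrow> ('s \<times> 's \<Rightarrow> ('s \<times> 's) pmf) \<Rightarrow> 's \<times> 's \<Rightarrow> ('s \<times> 's) set \<Rightarrow> real" where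
  "reach_prob \<tau> lab T x Z = (SUP n. reach_within \<tau> lab T Z n x)"

end

theory Submission
  imports Defs
begin

text \<open>Fix a policy that chooses, at every pair, a coupling optimal for the distance \<open>d\<close>.
  If every pair reachable from \<open>(s, t)\<close> had distance greater than \<open>\<epsilon>\<close>, then the reachable
  set \<open>R\<close> would be closed under the chain, so the optimal couplings of pairs in \<open>R\<close> are supported
  in \<open>R\<close>. Replacing \<open>d\<close> by \<open>(d - \<epsilon>) / (1 - \<epsilon>)\<close> on \<open>R\<close> then yields a prefixed point of \<open>\<Delta>\<close>,
  because expectations commute with this affine rescaling. As \<open>d\<close> is the least prefixed point,
  \<open>d \<le> (d - \<epsilon>) / (1 - \<epsilon>)\<close> on \<open>R\<close>, which forces \<open>d(s, t) = 1\<close>.\<close>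

section \<open>Couplings of finitely supported distributions\<close>

lemma set_pmf_coupling_subset:
  assumes "\<omega> \<in> couplings \<mu> \<nu>"
  shows "set_pmf \<omega> \<subseteq> set_pmf \<mu> \<times> set_pmf \<nu>"
proof
  fix p assume p: "p \<in> set_pmf \<omega>"
  have "set_pmf \<mu> = fst ` set_pmf \<omega>" "set_pmf \<nu> = snd ` set_pmf \<omega>"
    using assms unfolding couplings_def by (auto simp only: set_map_pmf mem_Collect_eq)
  then show "p \<in> set_pmf \<mu> \<times> set_pmf \<nu>" using p by (metis mem_Times_iff image_eqI)
qed

lemma pair_pmf_in_couplings: "pair_pmf \<mu> \<nu> \<in> couplings \<mu> \<nu>"
  by (simp add: couplings_def map_fst_pair_pmf map_snd_pair_pmf)

lemma couplings_nonempty: "couplings \<mu> \<nu> \<noteq> {}"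
  using pair_pmf_in_couplings by blast

lemma pmf_map_fst_eq_sum:
  assumes "finite B" "set_pmf \<omega> \<subseteq> A \<times> B"
  shows "pmf (map_pmf fst \<omega>) a = (\<Sum>b\<in>B. pmf \<omega> (a, b))"
proof -
  have "pmf (map_pmf fst \<omega>) a = measure \<omega> (fst -` {a} \<inter> set_pmf \<omega>)"
    by (simp add: pmf_map measure_Int_set_pmf)
  also have "fst -` {a} \<inter> set_pmf \<omega> = ({a} \<times> B) \<inter> set_pmf \<omega>" using assms by auto
  also have "measure \<omega> \<dots> = sum (pmf \<omega>) ({a} \<times> B)"
    using assms by (simp add: measure_Int_set_pmf measure_measure_pmf_finite)
  also have "{a} \<times> B = Pair a ` B" by auto
  also have "sum (pmf \<omega>) \<dots> = (\<Sum>b\<in>B. pmf \<omega> (a, b))" by (simp add: sum.reindex inj_on_def)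
  finally show ?thesis .
qed

lemma pmf_map_snd_eq_sum:
  assumes "finite A" "set_pmf \<omega> \<subseteq> A \<times> B"
  shows "pmf (map_pmf snd \<omega>) b = (\<Sum>a\<in>A. pmf \<omega> (a, b))"
proof -
  have "pmf (map_pmf snd \<omega>) b = measure \<omega> (snd -` {b} \<inter> set_pmf \<omega>)"
    by (simp add: pmf_map measure_Int_set_pmf)
  also have "snd -` {b} \<inter> set_pmf \<omega> = (A \<times> {b}) \<inter> set_pmf \<omega>" using assms by auto
  also have "measure \<omega> \<dots> = sum (pmf \<omega>) (A \<times> {b})"
    using assms by (simp add: measure_Int_set_pmf measure_measure_pmf_finite)
  also have "A \<times> {b} = (\<lambda>a. (a, b)) ` A" by auto
  also have "sum (pmf \<omega>) \<dots> = (\<Sum>a\<in>A. pmf \<omega> (a, b))" by (simp add: sum.reindex inj_on_def)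
  finally show ?thesis .
qed

definition coupling_weights :: "'s pmf \<Rightarrow> 's pmf \<Rightarrow> ('s \<times> 's \<Rightarrow> real) set" where
  "coupling_weights \<mu> \<nu> =
     {g. (\<forall>p. 0 \<le> g p \<and> g p \<le> 1 \<and> (p \<notin> set_pmf \<mu> \<times> set_pmf \<nu> \<longrightarrow> g p = 0))
       \<and> (\<forall>a. (\<Sum>b\<in>set_pmf \<nu>. g (a, b)) = pmf \<mu> a)
       \<and> (\<forall>b. (\<Sum>a\<in>set_pmf \<mu>. g (a, b)) = pmf \<nu> b)}"

lemma compact_coupling_weights: "compact (coupling_weights \<mu> \<nu>)"
proof -
  define X where "X = (\<lambda>p. if p \<in> set_pmf \<mu> \<times> set_pmf \<nu> then {0..1::real} else {0})"
  have X_iff: "g p \<in> X p \<longleftrightarrow> 0 \<le> g p \<and> g p \<le> 1 \<and> (p \<notin> set_pmf \<mu> \<times> set_pmf \<nu> \<longrightarrow> g p = 0)"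
    for g :: "_ \<Rightarrow> real" and p by (auto simp: X_def)
  have "compactin (product_topology (\<lambda>_. euclidean) UNIV) (Pi\<^sub>E UNIV X)"
    by (subst compactin_PiE) (auto simp: X_def)
  then have "compact (Pi\<^sub>E UNIV X)" by (simp add: euclidean_product_topology)
  have closed_sum_fst: "closed {g. (\<Sum>b\<in>set_pmf \<nu>. g (a, b)) = pmf \<mu> a}" for a
    by (intro closed_Collect_eq continuous_on_sum continuous_on_const
        continuous_on_product_coordinates)
  have closed_sum_snd: "closed {g. (\<Sum>a\<in>set_pmf \<mu>. g (a, b)) = pmf \<nu> b}" for b
    by (intro closed_Collect_eq continuous_on_sum continuous_on_const
        continuous_on_product_coordinates)
  have "Pi\<^sub>E UNIV X =
      {g. \<forall>p. 0 \<le> g p \<and> g p \<le> 1 \<and> (p \<notin> set_pmf \<mu> \<times> set_pmf \<nu> \<longrightarrow> g p = 0)}"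
    by (simp only: PiE_UNIV_domain Pi_def X_iff) simp
  then have "coupling_weights \<mu> \<nu> = Pi\<^sub>E UNIV X
      \<inter> (\<Inter>a. {g. (\<Sum>b\<in>set_pmf \<nu>. g (a, b)) = pmf \<mu> a})
      \<inter> (\<Inter>b. {g. (\<Sum>a\<in>set_pmf \<mu>. g (a, b)) = pmf \<nu> b})"
    unfolding coupling_weights_def by blast
  then show ?thesis
    by (simp only:) (intro compact_Int_closed closed_INT ballI \<open>compact (Pi\<^sub>E UNIV X)\<close>
        closed_sum_fst closed_sum_snd)
qed

lemma pmf_in_coupling_weights:
  assumes "\<omega> \<in> couplings \<mu> \<nu>" "finite (set_pmf \<mu>)" "finite (set_pmf \<nu>)"
  shows "pmf \<omega> \<in> coupling_weights \<mu> \<nu>"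
proof -
  have sub: "set_pmf \<omega> \<subseteq> set_pmf \<mu> \<times> set_pmf \<nu>" by (rule set_pmf_coupling_subset[OF assms(1)])
  have "p \<notin> set_pmf \<mu> \<times> set_pmf \<nu> \<Longrightarrow> pmf \<omega> p = 0" for p
    using sub by (auto simp: set_pmf_eq)
  moreover have "map_pmf fst \<omega> = \<mu>" "map_pmf snd \<omega> = \<nu>"
    using assms(1) by (simp_all add: couplings_def)
  ultimately show ?thesis
    unfolding coupling_weights_def
    using pmf_map_fst_eq_sum[OF assms(3) sub] pmf_map_snd_eq_sum[OF assms(2) sub]
    by (simp add: pmf_le_1)
qed

lemma coupling_weights_eq_pmf:
  assumes "g \<in> coupling_weights \<mu> \<nu>" "finite (set_pmf \<mu>)" "finite (set_pmf \<nu>)"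
  obtains \<omega> where "\<omega> \<in> couplings \<mu> \<nu>" "pmf \<omega> = g"
proof -
  let ?A = "set_pmf \<mu>" and ?B = "set_pmf \<nu>"
  have g0: "0 \<le> g p" and gout: "p \<notin> ?A \<times> ?B \<Longrightarrow> g p = 0" for p
    using assms(1) unfolding coupling_weights_def by blast+
  have gfst: "(\<Sum>b\<in>?B. g (a, b)) = pmf \<mu> a" and gsnd: "(\<Sum>a\<in>?A. g (a, b)) = pmf \<nu> b" for a b
    using assms(1) by (auto simp: coupling_weights_def)
  have "(\<Sum>p\<in>?A \<times> ?B. g p) = (\<Sum>a\<in>?A. \<Sum>b\<in>?B. g (a, b))"
    by (simp add: sum.cartesian_product)
  also have "\<dots> = (\<Sum>a\<in>?A. pmf \<mu> a)" by (simp add: gfst)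
  also have "\<dots> = 1" using assms(2) by (simp add: sum_pmf_eq_1)
  finally have "(\<integral>\<^sup>+p. ennreal (g p) \<partial>count_space UNIV) = 1"
    using assms(2,3) by (subst nn_integral_count_space') (auto simp: gout g0)
  then have pmf_embed: "pmf (embed_pmf g) = g" using g0 by (intro ext pmf_embed_pmf) auto
  have sub: "set_pmf (embed_pmf g) \<subseteq> ?A \<times> ?B" using gout by (force simp: set_pmf_iff pmf_embed)
  have "map_pmf fst (embed_pmf g) = \<mu>" "map_pmf snd (embed_pmf g) = \<nu>"
    by (auto intro!: pmf_eqI simp: pmf_map_fst_eq_sum[OF assms(3) sub]
        pmf_map_snd_eq_sum[OF assms(2) sub] pmf_embed gfst gsnd)
  then show ?thesis using that pmf_embed by (simp add: couplings_def)
qed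

text \<open>The couplings of two finitely supported distributions form a compact polytope of weight
  functions, on which the expectation of \<open>f\<close> is a continuous (linear) function.\<close>
lemma couplings_attain_min_expectation:
  fixes f :: "'s \<times> 's \<Rightarrow> real"
  assumes fin: "finite (set_pmf \<mu>)" "finite (set_pmf \<nu>)"
  shows "\<exists>\<omega>\<in>couplings \<mu> \<nu>. \<forall>\<omega>'\<in>couplings \<mu> \<nu>.
           measure_pmf.expectation \<omega> f \<le> measure_pmf.expectation \<omega>' f"
proof -
  define F where "F = (\<lambda>g. \<Sum>p\<in>set_pmf \<mu> \<times> set_pmf \<nu>. f p * g p)"
  have "continuous_on (coupling_weights \<mu> \<nu>) F" unfolding F_def
    by (intro continuous_on_sum continuous_on_mult continuous_on_const)
       (auto intro: continuous_on_subset[OF continuous_on_product_coordinates])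
  moreover have "coupling_weights \<mu> \<nu> \<noteq> {}"
    using pmf_in_coupling_weights[OF pair_pmf_in_couplings fin] by blast
  ultimately obtain g where g: "g \<in> coupling_weights \<mu> \<nu>"
    and g_min: "\<And>h. h \<in> coupling_weights \<mu> \<nu> \<Longrightarrow> F g \<le> F h"
    using continuous_attains_inf[OF compact_coupling_weights] by blast
  obtain \<omega> where \<omega>: "\<omega> \<in> couplings \<mu> \<nu>" "pmf \<omega> = g"
    using coupling_weights_eq_pmf[OF g fin] by blast
  have F_exp: "measure_pmf.expectation \<omega>' f = F (pmf \<omega>')" if "\<omega>' \<in> couplings \<mu> \<nu>" for \<omega>'
    using set_pmf_coupling_subset[OF that] fin unfolding F_def
    by (subst integral_measure_pmf_real[of "set_pmf \<mu> \<times> set_pmf \<nu>"]) auto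
  show ?thesis
  proof (intro bexI ballI)
    fix \<omega>' assume \<omega>': "\<omega>' \<in> couplings \<mu> \<nu>"
    have "measure_pmf.expectation \<omega> f = F g" using F_exp[OF \<omega>(1)] \<omega>(2) by simp
    also have "\<dots> \<le> F (pmf \<omega>')" by (rule g_min[OF pmf_in_coupling_weights[OF \<omega>' fin]])
    also have "\<dots> = measure_pmf.expectation \<omega>' f" by (rule F_exp[OF \<omega>', symmetric])
    finally show "measure_pmf.expectation \<omega> f \<le> measure_pmf.expectation \<omega>' f" .
  qed (rule \<omega>(1))
qed

section \<open>The distance as least prefixed point\<close>

definition unit_valued :: "('s \<Rightarrow> 's \<Rightarrow> real) \<Rightarrow> bool" where
  "unit_valued e \<longleftrightarrow> (\<forall>u v. 0 \<le> e u v \<and> e u v \<le> 1)"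

locale labelled_chain =
  fixes \<tau> :: "'s \<Rightarrow> 's pmf" and lab :: "'s \<Rightarrow> 'l"
begin

abbreviation "D \<equiv> Delta \<tau> lab"
abbreviation "d \<equiv> bisim_dist \<tau> lab"
abbreviation "cost \<omega> e \<equiv> measure_pmf.expectation \<omega> (\<lambda>(u, v). e u v)"

lemma integrable_cost: "unit_valued e \<Longrightarrow> integrable (measure_pmf \<omega>) (\<lambda>(u, v). e u v)"
  by (intro measure_pmf.integrable_const_bound[where B = 1])
     (auto simp: unit_valued_def split: prod.splits)

lemma cost_bounds:
  assumes "unit_valued e"
  shows "0 \<le> cost \<omega> e" "cost \<omega> e \<le> 1"
proof -
  show "0 \<le> cost \<omega> e"
    using assms by (auto simp: unit_valued_def intro!: integral_nonneg_AE split: prod.splits)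
  have "cost \<omega> e \<le> measure_pmf.expectation \<omega> (\<lambda>_. 1::real)"
    using assms by (intro integral_mono integrable_cost) (auto simp: unit_valued_def)
  then show "cost \<omega> e \<le> 1" by simp
qed

lemma bdd_below_cost: "unit_valued e \<Longrightarrow> bdd_below ((\<lambda>\<omega>. cost \<omega> e) ` A)"
  using cost_bounds by (meson bdd_belowI2)

lemma Delta_le_cost:
  assumes "unit_valued e" "\<omega> \<in> couplings (\<tau> s) (\<tau> t)" "lab s = lab t"
  shows "D e s t \<le> cost \<omega> e"
  using assms unfolding Delta_def by (simp add: cINF_lower[OF bdd_below_cost[OF assms(1)]])

lemma unit_valued_Delta:
  assumes "unit_valued e"
  shows "unit_valued (D e)"
  unfolding unit_valued_def
proof (intro allI conjI)
  fix s t
  show "0 \<le> D e s t" unfolding Delta_def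
    using assms cost_bounds couplings_nonempty[of "\<tau> s" "\<tau> t"] by (auto intro!: cINF_greatest)
  show "D e s t \<le> 1"
  proof (cases "lab s = lab t")
    case True
    show ?thesis
      using Delta_le_cost[OF assms pair_pmf_in_couplings True] cost_bounds(2)[OF assms]
      by (rule order_trans)
  qed (simp add: Delta_def)
qed

lemma Delta_mono:
  assumes "unit_valued e" "unit_valued e'" "\<And>u v. e u v \<le> e' u v"
  shows "D e s t \<le> D e' s t"
proof (cases "lab s = lab t")
  case True
  have "cost \<omega> e \<le> cost \<omega> e'" for \<omega>
    using assms by (intro integral_mono integrable_cost) (auto split: prod.splits)
  then show ?thesis unfolding Delta_def using True
    by (simp, intro cINF_mono couplings_nonempty bdd_below_cost[OF assms(1)]) blast
qed (simp add: Delta_def)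

definition Delta_prefixpoints :: "('s \<Rightarrow> 's \<Rightarrow> real) set" where
  "Delta_prefixpoints = {e. unit_valued e \<and> (\<forall>u v. D e u v \<le> e u v)}"

definition least_prefixpoint :: "'s \<Rightarrow> 's \<Rightarrow> real" where
  "least_prefixpoint u v = (INF e\<in>Delta_prefixpoints. e u v)"

lemma one_in_Delta_prefixpoints: "(\<lambda>_ _. 1) \<in> Delta_prefixpoints"
proof -
  have one: "unit_valued (\<lambda>_ _. 1)" by (simp add: unit_valued_def)
  show ?thesis unfolding Delta_prefixpoints_def mem_Collect_eq
    using one unit_valued_Delta[OF one] unfolding unit_valued_def by blast
qed

lemma least_prefixpoint_le: "e \<in> Delta_prefixpoints \<Longrightarrow> least_prefixpoint u v \<le> e u v"
  unfolding least_prefixpoint_def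
  by (rule cINF_lower[OF bdd_belowI2[of _ 0]]) (auto simp: Delta_prefixpoints_def unit_valued_def)

lemma unit_valued_least_prefixpoint: "unit_valued least_prefixpoint"
  unfolding unit_valued_def
proof (intro allI conjI)
  fix u v
  have "Delta_prefixpoints \<noteq> {}" using one_in_Delta_prefixpoints by blast
  then show "0 \<le> least_prefixpoint u v" unfolding least_prefixpoint_def
    by (rule cINF_greatest) (auto simp: Delta_prefixpoints_def unit_valued_def)
  show "least_prefixpoint u v \<le> 1"
    using least_prefixpoint_le[OF one_in_Delta_prefixpoints] by simp
qed

lemma Delta_least_prefixpoint_le: "D least_prefixpoint u v \<le> least_prefixpoint u v"
  unfolding least_prefixpoint_def[of u v]
proof (rule cINF_greatest)
  show "Delta_prefixpoints \<noteq> {}" using one_in_Delta_prefixpoints by blast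
  fix e assume e: "e \<in> Delta_prefixpoints"
  have "D least_prefixpoint u v \<le> D e u v"
    using e unit_valued_least_prefixpoint least_prefixpoint_le
    by (intro Delta_mono) (auto simp: Delta_prefixpoints_def)
  also have "\<dots> \<le> e u v" using e by (auto simp: Delta_prefixpoints_def)
  finally show "D least_prefixpoint u v \<le> e u v" .
qed

text \<open>Knaster--Tarski: by monotonicity of \<open>\<Delta>\<close>, the infimum of the prefixed points is itself a
  prefixed point, and its image is again one, so it is a fixed point.\<close>
lemma Delta_least_prefixpoint: "D least_prefixpoint = least_prefixpoint"
proof -
  have "D least_prefixpoint \<in> Delta_prefixpoints" unfolding Delta_prefixpoints_def
    using unit_valued_Delta[OF unit_valued_least_prefixpoint] Delta_least_prefixpoint_le
    by (auto intro!: Delta_mono unit_valued_Delta unit_valued_least_prefixpoint)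
  then have "least_prefixpoint u v \<le> D least_prefixpoint u v" for u v
    by (rule least_prefixpoint_le)
  then show ?thesis using Delta_least_prefixpoint_le by (intro ext antisym) auto
qed

lemma bisim_dist_eq_least_prefixpoint: "d = least_prefixpoint"
proof (intro ext)
  fix u v
  let ?F = "{e. D e = e \<and> (\<forall>u v. 0 \<le> e u v \<and> e u v \<le> 1)}"
  have lfp: "least_prefixpoint \<in> ?F"
    using Delta_least_prefixpoint unit_valued_least_prefixpoint by (auto simp: unit_valued_def)
  have "?F \<subseteq> Delta_prefixpoints" by (auto simp: Delta_prefixpoints_def unit_valued_def)
  then have lower: "e \<in> ?F \<Longrightarrow> least_prefixpoint u v \<le> e u v" for e
    using least_prefixpoint_le by blast
  show "d u v = least_prefixpoint u v" unfolding bisim_dist_def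
    by (intro antisym cINF_lower lfp cINF_greatest lower)
       (use lfp in \<open>auto intro: bdd_belowI2[of _ "least_prefixpoint u v"] lower\<close>)
qed

lemma Delta_bisim_dist: "D d = d"
  using bisim_dist_eq_least_prefixpoint Delta_least_prefixpoint by simp

lemma unit_valued_bisim_dist: "unit_valued d"
  using bisim_dist_eq_least_prefixpoint unit_valued_least_prefixpoint by simp

lemma bisim_dist_le_prefixpoint:
  "unit_valued e \<Longrightarrow> (\<And>u v. D e u v \<le> e u v) \<Longrightarrow> d u v \<le> e u v"
  using bisim_dist_eq_least_prefixpoint least_prefixpoint_le
  by (auto simp: Delta_prefixpoints_def)

lemma bisim_dist_diff_labels: "lab u \<noteq> lab v \<Longrightarrow> d u v = 1"
  using fun_cong[OF fun_cong[OF Delta_bisim_dist, of u], of v] by (simp add: Delta_def)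

end

lemma set_pmf_Int_class_nonempty:
  assumes eq: "equiv UNIV R"
    and classes: "\<And>E. E \<in> UNIV // R \<Longrightarrow> measure_pmf.prob \<mu> E = measure_pmf.prob \<nu> E"
    and x: "x \<in> set_pmf \<mu>"
  shows "set_pmf \<nu> \<inter> R``{x} \<noteq> {}"
proof
  assume disjoint: "set_pmf \<nu> \<inter> R``{x} = {}"
  have "0 < pmf \<mu> x" using x by (simp add: pmf_positive)
  also have "pmf \<mu> x \<le> measure_pmf.prob \<mu> (R``{x})"
    using eq by (auto simp: measure_pmf_single[symmetric] equiv_def refl_on_def
        intro!: measure_pmf.finite_measure_mono)
  also have "\<dots> = measure_pmf.prob \<nu> (R``{x} \<inter> set_pmf \<nu>)"
    by (simp add: classes quotientI measure_Int_set_pmf)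
  also have "\<dots> = 0" using disjoint by (simp add: Int_commute)
  finally show False by simp
qed

text \<open>Resampling \<open>\<nu>\<close> within the class of each point drawn from \<open>\<mu>\<close> reproduces \<open>\<nu>\<close>, because
  \<open>\<mu>\<close> and \<open>\<nu>\<close> give every class the same mass.\<close>
lemma bind_cond_pmf_classes:
  assumes eq: "equiv UNIV R"
    and classes: "\<And>E. E \<in> UNIV // R \<Longrightarrow> measure_pmf.prob \<mu> E = measure_pmf.prob \<nu> E"
  shows "bind_pmf \<mu> (\<lambda>x. cond_pmf \<nu> (R``{x})) = \<nu>"
proof (rule pmf_eqI)
  fix y
  define c where "c = pmf \<nu> y / measure_pmf.prob \<nu> (R``{y})"
  have y_class: "y \<in> R``{y}" using eq by (auto simp: equiv_def refl_on_def)
  have "pmf (cond_pmf \<nu> (R``{x})) y = indicator (R``{y}) x * c" if x: "x \<in> set_pmf \<mu>" for x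
  proof -
    have "pmf (cond_pmf \<nu> (R``{x})) y
        = (if y \<in> R``{x} then pmf \<nu> y / measure_pmf.prob \<nu> (R``{x}) else 0)"
      by (rule pmf_cond[OF set_pmf_Int_class_nonempty[OF eq classes x]])
    moreover have "(x, y) \<in> R \<longleftrightarrow> (y, x) \<in> R" using eq by (meson equivE symE)
    moreover have "(x, y) \<in> R \<Longrightarrow> R``{x} = R``{y}" using eq by (simp add: equiv_class_eq)
    ultimately show ?thesis by (auto simp: c_def)
  qed
  then have "pmf (bind_pmf \<mu> (\<lambda>x. cond_pmf \<nu> (R``{x}))) y
      = (\<integral>x. indicator (R``{y}) x * c \<partial>measure_pmf \<mu>)"
    by (simp add: pmf_bind cong: integral_cong_AE[OF _ _ AE_pmfI])
  also have "\<dots> = measure_pmf.prob \<nu> (R``{y}) * c" by (simp add: classes quotientI)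
  also have "\<dots> = pmf \<nu> y"
  proof (cases "measure_pmf.prob \<nu> (R``{y}) = 0")
    case True
    have "pmf \<nu> y \<le> measure_pmf.prob \<nu> (R``{y})"
      using y_class by (auto simp: measure_pmf_single[symmetric]
          intro!: measure_pmf.finite_measure_mono)
    then show ?thesis using True pmf_nonneg[of \<nu> y] by simp
  qed (simp add: c_def)
  finally show "pmf (bind_pmf \<mu> (\<lambda>x. cond_pmf \<nu> (R``{x}))) y = pmf \<nu> y" .
qed

lemma bisimulation_coupling:
  assumes eq: "equiv UNIV R"
    and classes: "\<And>E. E \<in> UNIV // R \<Longrightarrow> measure_pmf.prob \<mu> E = measure_pmf.prob \<nu> E"
  shows "\<exists>\<omega>\<in>couplings \<mu> \<nu>. set_pmf \<omega> \<subseteq> R"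
proof
  let ?\<omega> = "bind_pmf \<mu> (\<lambda>x. map_pmf (Pair x) (cond_pmf \<nu> (R``{x})))"
  show "set_pmf ?\<omega> \<subseteq> R" using set_cond_pmf[OF set_pmf_Int_class_nonempty[OF eq classes]] by auto
  have "map_pmf snd ?\<omega> = bind_pmf \<mu> (\<lambda>x. cond_pmf \<nu> (R``{x}))"
    by (simp add: map_bind_pmf map_pmf_comp)
  then show "?\<omega> \<in> couplings \<mu> \<nu>"
    by (simp add: couplings_def bind_cond_pmf_classes[OF eq classes] map_bind_pmf map_pmf_comp
        bind_return_pmf')
qed

context labelled_chain
begin

lemma bisim_dist_bisimilar:
  assumes "bisimilar \<tau> lab u v"
  shows "d u v = 0"
proof -
  obtain R where R: "prob_bisimulation \<tau> lab R" and uv: "(u, v) \<in> R"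
    using assms by (auto simp: bisimilar_def)
  define e where "e = (\<lambda>a b. if (a, b) \<in> R then 0 else d a b)"
  have e: "unit_valued e" "\<And>a b. e a b \<le> d a b"
    using unit_valued_bisim_dist by (auto simp: unit_valued_def e_def)
  have "D e a b \<le> e a b" for a b
  proof (cases "(a, b) \<in> R")
    case True
    then have "lab a = lab b" and "\<exists>\<omega>\<in>couplings (\<tau> a) (\<tau> b). set_pmf \<omega> \<subseteq> R"
      using R unfolding prob_bisimulation_def by (auto intro!: bisimulation_coupling)
    then obtain \<omega> where "D e a b \<le> cost \<omega> e" "set_pmf \<omega> \<subseteq> R"
      using Delta_le_cost[OF e(1)] by blast
    moreover have "cost \<omega> e = 0" if "set_pmf \<omega> \<subseteq> R" for \<omega>
      using that by (intro integral_eq_zero_AE AE_pmfI) (auto simp: e_def)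
    ultimately show ?thesis using True by (simp add: e_def)
  next
    case False
    have "D e a b \<le> D d a b" by (rule Delta_mono[OF e(1) unit_valued_bisim_dist e(2)])
    then show ?thesis using False by (simp add: e_def Delta_bisim_dist)
  qed
  then have "d u v \<le> e u v" by (rule bisim_dist_le_prefixpoint[OF e(1)])
  then show ?thesis using uv unit_valued_bisim_dist by (auto simp: e_def unit_valued_def intro: antisym)
qed

end

section \<open>Reachability in the chain on pairs\<close>

lemma expectation_pos_iff:
  fixes f :: "'a \<Rightarrow> real"
  assumes "integrable (measure_pmf M) f" "\<And>x. x \<in> set_pmf M \<Longrightarrow> 0 \<le> f x"
  shows "0 < measure_pmf.expectation M f \<longleftrightarrow> (\<exists>x\<in>set_pmf M. 0 < f x)"
proof -
  have nonneg: "AE x in M. 0 \<le> f x" using assms(2) by (simp add: AE_measure_pmf_iff)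
  then have "measure_pmf.expectation M f = 0 \<longleftrightarrow> (\<forall>x\<in>set_pmf M. f x = 0)"
    using assms(1) by (simp add: integral_nonneg_eq_0_iff_AE AE_measure_pmf_iff)
  moreover have "0 \<le> measure_pmf.expectation M f" by (rule integral_nonneg_AE[OF nonneg])
  ultimately show ?thesis using assms(2) by (force simp: less_le)
qed

lemma expectation_affine_on_support:
  fixes f g :: "'a \<Rightarrow> real"
  assumes "integrable (measure_pmf M) f" "\<And>x. x \<in> set_pmf M \<Longrightarrow> g x = (f x - c) / k"
  shows "measure_pmf.expectation M g = (measure_pmf.expectation M f - c) / k"
proof -
  have "measure_pmf.expectation M g = measure_pmf.expectation M (\<lambda>x. (f x - c) / k)"
    using assms(2) by (intro integral_cong_AE) (auto simp: AE_measure_pmf_iff)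
  also have "\<dots> = (measure_pmf.expectation M f - c) / k"
    using assms(1) by (simp add: Bochner_Integration.integral_diff)
  finally show ?thesis .
qed

lemma reach_within_bounds:
  "0 \<le> reach_within \<tau> lab T Z n x \<and> reach_within \<tau> lab T Z n x \<le> 1"
proof (induction n arbitrary: x)
  case (Suc n)
  let ?M = "measure_pmf (chain_step \<tau> lab T x)"
  have "integrable ?M (reach_within \<tau> lab T Z n)"
    by (intro measure_pmf.integrable_const_bound[where B = 1] AE_I2) (use Suc.IH in auto)
  then have "integral\<^sup>L ?M (reach_within \<tau> lab T Z n) \<le> integral\<^sup>L ?M (\<lambda>_. 1)"
    by (rule integral_mono) (use Suc.IH in auto)
  moreover have "0 \<le> integral\<^sup>L ?M (reach_within \<tau> lab T Z n)"
    by (intro integral_nonneg_AE AE_I2) (use Suc.IH in auto)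
  ultimately show ?case by simp
qed simp

lemma integrable_reach_within: "integrable (measure_pmf M) (reach_within \<tau> lab T Z n)"
  by (intro measure_pmf.integrable_const_bound[where B = 1] AE_I2)
     (simp_all add: abs_le_iff reach_within_bounds)

lemma reach_within_le_reach_prob: "reach_within \<tau> lab T Z n x \<le> reach_prob \<tau> lab T x Z"
  unfolding reach_prob_def
  by (rule cSUP_upper[OF UNIV_I bdd_aboveI2[where M = 1]]) (use reach_within_bounds in blast)

lemma reach_prob_pos_iff:
  "0 < reach_prob \<tau> lab T x Z \<longleftrightarrow> (\<exists>n. 0 < reach_within \<tau> lab T Z n x)"
proof
  assume "0 < reach_prob \<tau> lab T x Z"
  then show "\<exists>n. 0 < reach_within \<tau> lab T Z n x"
    unfolding reach_prob_def using cSUP_least[of UNIV "\<lambda>n. reach_within \<tau> lab T Z n x" 0]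
    by (auto simp: not_less[symmetric])
qed (use reach_within_le_reach_prob in \<open>blast intro: less_le_trans\<close>)

lemma reach_within_Suc_pos_iff:
  "0 < reach_within \<tau> lab T Z (Suc n) x \<longleftrightarrow>
     x \<in> Z \<or> (\<exists>z\<in>set_pmf (chain_step \<tau> lab T x). 0 < reach_within \<tau> lab T Z n z)"
  using expectation_pos_iff[OF integrable_reach_within, of "chain_step \<tau> lab T x" \<tau> lab T Z n]
  by (simp add: reach_within_bounds)

lemma reach_within_singleton_step:
  assumes "0 < reach_within \<tau> lab T {x} n x\<^sub>0" "y \<in> set_pmf (chain_step \<tau> lab T x)"
  shows "0 < reach_within \<tau> lab T {y} (Suc n) x\<^sub>0"
  using assms(1)
proof (induction n arbitrary: x\<^sub>0)
  case 0
  then show ?case using assms(2) by (auto simp only: reach_within_Suc_pos_iff) (auto split: if_splits)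
next
  case (Suc n)
  show ?case
    unfolding reach_within_Suc_pos_iff[of _ _ _ _ "Suc n"]
  proof (cases "x\<^sub>0 = x")
    case True
    then show "x\<^sub>0 \<in> {y} \<or> (\<exists>z\<in>set_pmf (chain_step \<tau> lab T x\<^sub>0). 0 < reach_within \<tau> lab T {y} (Suc n) z)"
      using assms(2) reach_within_Suc_pos_iff by blast
  next
    case False
    then obtain z where "z \<in> set_pmf (chain_step \<tau> lab T x\<^sub>0)" "0 < reach_within \<tau> lab T {x} n z"
      using Suc.prems reach_within_Suc_pos_iff by blast
    then show "x\<^sub>0 \<in> {y} \<or> (\<exists>z\<in>set_pmf (chain_step \<tau> lab T x\<^sub>0). 0 < reach_within \<tau> lab T {y} (Suc n) z)"
      using Suc.IH by blast
  qed
qed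

lemma reach_prob_step:
  assumes "0 < reach_prob \<tau> lab T x\<^sub>0 {x}" "y \<in> set_pmf (chain_step \<tau> lab T x)"
  shows "0 < reach_prob \<tau> lab T x\<^sub>0 {y}"
  using assms reach_within_singleton_step by (meson reach_prob_pos_iff)

lemma reach_prob_self: "0 < reach_prob \<tau> lab T x {x}"
  by (subst reach_prob_pos_iff) (auto intro: exI[of _ 0])

section \<open>Optimal policies\<close>

definition rescale :: "('s \<times> 's) set \<Rightarrow> real \<Rightarrow> ('s \<Rightarrow> 's \<Rightarrow> real) \<Rightarrow> 's \<Rightarrow> 's \<Rightarrow> real" where
  "rescale R \<epsilon> e u v = (if (u, v) \<in> R then (e u v - \<epsilon>) / (1 - \<epsilon>) else e u v)"

lemma unit_valued_rescale:
  assumes "unit_valued e" "\<epsilon> < 1" "\<And>u v. (u, v) \<in> R \<Longrightarrow> \<epsilon> \<le> e u v"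
  shows "unit_valued (rescale R \<epsilon> e)"
  using assms by (auto simp: unit_valued_def rescale_def divide_le_eq_1)

lemma rescale_le:
  assumes "unit_valued e" "0 \<le> \<epsilon>" "\<epsilon> < 1"
  shows "rescale R \<epsilon> e u v \<le> e u v"
proof -
  have "e u v - \<epsilon> \<le> e u v * (1 - \<epsilon>)"
    using assms by (auto simp: unit_valued_def algebra_simps intro: mult_left_le)
  then show ?thesis using assms(3) by (simp add: rescale_def pos_divide_le_eq)
qed

locale finitely_branching = labelled_chain +
  assumes finite_transitions: "\<And>s. finite (set_pmf (\<tau> s))"
begin

lemma Delta_attained:
  assumes "unit_valued e" "lab s = lab t"
  shows "\<exists>\<omega>\<in>couplings (\<tau> s) (\<tau> t). D e s t = cost \<omega> e"
proof -
  obtain \<omega> where \<omega>: "\<omega> \<in> couplings (\<tau> s) (\<tau> t)"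
    and min: "\<And>\<omega>'. \<omega>' \<in> couplings (\<tau> s) (\<tau> t) \<Longrightarrow> cost \<omega> e \<le> cost \<omega>' e"
    using couplings_attain_min_expectation[OF finite_transitions finite_transitions] by blast
  have "D e s t = cost \<omega> e"
    unfolding Delta_def using assms(2)
    by (simp, intro antisym cINF_lower bdd_below_cost[OF assms(1)] \<omega> cINF_greatest
        couplings_nonempty min)
  then show ?thesis using \<omega> by blast
qed

definition optimal_policy :: "('a \<times> 'a \<Rightarrow> ('a \<times> 'a) pmf) \<Rightarrow> bool" where
  "optimal_policy T \<longleftrightarrow> (\<forall>(s, t)\<in>unknown_pairs \<tau> lab.
     T (s, t) \<in> couplings (\<tau> s) (\<tau> t) \<and> d s t = cost (T (s, t)) d)"

lemma optimal_policy_exists: "\<exists>T. optimal_policy T"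
proof -
  have "\<forall>x\<in>unknown_pairs \<tau> lab. \<exists>\<omega>. \<omega> \<in> couplings (\<tau> (fst x)) (\<tau> (snd x))
      \<and> d (fst x) (snd x) = cost \<omega> d"
    using Delta_attained[OF unit_valued_bisim_dist] Delta_bisim_dist
    by (auto simp: unknown_pairs_def)
  from bchoice[OF this] obtain T where "\<forall>x\<in>unknown_pairs \<tau> lab.
      T x \<in> couplings (\<tau> (fst x)) (\<tau> (snd x)) \<and> d (fst x) (snd x) = cost (T x) d"
    by blast
  then show ?thesis unfolding optimal_policy_def by (intro exI[of _ T]) (auto simp: case_prod_beta)
qed

lemma is_policy_if_optimal: "optimal_policy T \<Longrightarrow> is_policy \<tau> lab T"
  by (auto simp: optimal_policy_def is_policy_def)

text \<open>On a set \<open>R\<close> closed under an optimal policy and on which \<open>d > \<epsilon>\<close>, the optimal couplings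
  stay inside \<open>R\<close>, so the rescaling commutes with taking their expectation.\<close>
lemma Delta_rescale_le:
  assumes T: "optimal_policy T"
    and closed: "\<And>z. z \<in> R \<Longrightarrow> set_pmf (chain_step \<tau> lab T z) \<subseteq> R"
    and far: "\<And>u v. (u, v) \<in> R \<Longrightarrow> \<epsilon> < d u v"
    and \<epsilon>: "0 \<le> \<epsilon>" "\<epsilon> < 1"
  shows "D (rescale R \<epsilon> d) a b \<le> rescale R \<epsilon> d a b"
proof -
  let ?e = "rescale R \<epsilon> d"
  have e: "unit_valued ?e"
    using unit_valued_rescale[OF unit_valued_bisim_dist \<epsilon>(2)] far by (simp add: less_imp_le)
  consider "lab a \<noteq> lab b" | "lab a = lab b" "(a, b) \<notin> R" | "lab a = lab b" "(a, b) \<in> R"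
    by blast
  then show ?thesis
  proof cases
    case 1
    then show ?thesis using \<epsilon> by (simp add: Delta_def rescale_def bisim_dist_diff_labels)
  next
    case 2
    have "D ?e a b \<le> D d a b"
      using Delta_mono[OF e unit_valued_bisim_dist] rescale_le[OF unit_valued_bisim_dist \<epsilon>] .
    then show ?thesis using 2 by (simp add: rescale_def Delta_bisim_dist)
  next
    case 3
    then have "(a, b) \<in> unknown_pairs \<tau> lab"
      using far[of a b] \<epsilon>(1) bisim_dist_bisimilar by (force simp: unknown_pairs_def)
    then have \<omega>: "T (a, b) \<in> couplings (\<tau> a) (\<tau> b)" "d a b = cost (T (a, b)) d"
      and support: "set_pmf (T (a, b)) \<subseteq> R"
      using T closed[OF 3(2)] by (auto simp: optimal_policy_def chain_step_def)
    have "D ?e a b \<le> cost (T (a, b)) ?e" by (rule Delta_le_cost[OF e \<omega>(1) 3(1)])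
    also have "\<dots> = (cost (T (a, b)) d - \<epsilon>) / (1 - \<epsilon>)"
      using support
      by (intro expectation_affine_on_support integrable_cost unit_valued_bisim_dist)
         (auto simp: rescale_def)
    also have "\<dots> = ?e a b" using \<omega>(2) 3(2) by (simp add: rescale_def)
    finally show ?thesis .
  qed
qed

lemma bisim_dist_one_on_closed_set:
  assumes T: "optimal_policy T"
    and closed: "\<And>z. z \<in> R \<Longrightarrow> set_pmf (chain_step \<tau> lab T z) \<subseteq> R"
    and far: "\<And>u v. (u, v) \<in> R \<Longrightarrow> \<epsilon> < d u v"
    and \<epsilon>: "0 < \<epsilon>" and st: "(s, t) \<in> R"
  shows "d s t = 1"
proof -
  have "\<epsilon> < 1"
    using far[OF st] unit_valued_bisim_dist unfolding unit_valued_def by (meson less_le_trans)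
  have "unit_valued (rescale R \<epsilon> d)"
    using unit_valued_rescale[OF unit_valued_bisim_dist \<open>\<epsilon> < 1\<close>] far by (simp add: less_imp_le)
  then have "d s t \<le> rescale R \<epsilon> d s t"
    using Delta_rescale_le[OF T closed far less_imp_le[OF \<epsilon>] \<open>\<epsilon> < 1\<close>]
    by (rule bisim_dist_le_prefixpoint)
  then have "d s t * (1 - \<epsilon>) \<le> d s t - \<epsilon>"
    using st \<open>\<epsilon> < 1\<close> by (simp add: rescale_def le_divide_eq)
  then show ?thesis using \<epsilon> unit_valued_bisim_dist by (auto simp: unit_valued_def algebra_simps
        intro: antisym)
qed

end

theorem mainTheorem11:
  fixes L :: "'l set" and \<tau> :: "'s::countable \<Rightarrow> 's pmf" and lab :: "'s \<Rightarrow> 'l"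
    and s t :: 's
  assumes "is_LMC L \<tau> lab"
    and "bisim_dist \<tau> lab s t < 1"
  shows "\<exists>T. is_policy \<tau> lab T \<and>
           (\<forall>\<epsilon>>0. \<exists>u v. bisim_dist \<tau> lab u v \<le> \<epsilon> \<and> reach_prob \<tau> lab T (s, t) {(u, v)} > 0)"
proof -
  interpret finitely_branching \<tau> lab
    using assms(1) by unfold_locales (simp add: is_LMC_def)
  obtain T where T: "optimal_policy T" using optimal_policy_exists by blast
  have "\<exists>u v. d u v \<le> \<epsilon> \<and> reach_prob \<tau> lab T (s, t) {(u, v)} > 0" if "\<epsilon> > 0" for \<epsilon>
  proof (rule ccontr)
    assume no_close_pair: "\<not> ?thesis"
    define R where "R = {z. 0 < reach_prob \<tau> lab T (s, t) {z}}"
    have "d s t = 1"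
    proof (rule bisim_dist_one_on_closed_set[OF T _ _ \<open>\<epsilon> > 0\<close>])
      show "set_pmf (chain_step \<tau> lab T z) \<subseteq> R" if "z \<in> R" for z
        using that reach_prob_step[of \<tau> lab T "(s, t)" z] unfolding R_def by blast
      show "\<epsilon> < d u v" if "(u, v) \<in> R" for u v
        using that no_close_pair by (auto simp: R_def not_le)
      show "(s, t) \<in> R" by (simp add: R_def reach_prob_self)
    qed
    then show False using assms(2) by simp
  qed
  then show ?thesis using is_policy_if_optimal[OF T] by blast
qed

end
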